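(* Let $\mathbf{A}=(A_{i,j})_{p\times p}$ be a deterministic symmetric $\{0,1\}$-valued matrix with zero diagonal, $\delta=\frac{2}{p(p-1)}\sum_{i<j}A_{i,j}$ its edge density, and $N=p(p-1)/2$. Let $\mathbf{Y},\mathbf{Y}_*$ be independent and identically distributed symmetric random matrices with zero diagonal, each generated as $Y_{i,j}=A_{i,j}I(\varepsilon_{i,j}=0)+I(\varepsilon_{i,j}=1)$ for $i\neq j$, where $\varepsilon_{i,j}=\varepsilon_{j,i}$, $\mathbb{P}(\varepsilon_{i,j}=1)=\alpha$, $\mathbb{P}(\varepsilon_{i,j}=0)=1-\alpha-\beta$, $\mathbb{P}(\varepsilon_{i,j}=-1)=\beta$ for all $i<j$, and $\{\varepsilon_{i,j}\}_{i<j}$ are independent. Let $\hat u_1=\frac{2}{p(p-1)}\sum_{i<j}Y_{i,j}$ and $\hat u_2=\frac{1}{p(p-1)}\sum_{i<j}|Y_{i,j,*}-Y_{i,j}|$. Define \[ \hat\beta=\frac{\hat u_2-\alpha+\hat u_1\alpha}{\hat u_1-\alpha},\qquad \hat\delta=\frac{(\hat u_1-\alpha)^2}{\hat u_1-\hat u_2-2\hat u_1\alpha+\alpha^2} \] (for use when $\alpha$ is known) and \[ \hat\alpha=\frac{\hat u_1\beta-\hat u_2}{\hat u_1+\beta-1},\qquad \hat\delta=\frac{\hat u_1^2-\hat u_1+\hat u_2}{\hat u_1+\hat u_2-2\hat u_1\beta-(1-\beta)^2} \] (for use when $\beta$ is known). Consider $p\to\infty$ (with $\mathbf{A}$, $\delta$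 and possibly $\alpha,\beta$ depending on $p$), and suppose $N_1=p(p-1)\delta\to\infty$ and $N_2=p(p-1)(1-\delta)\to\infty$. Then (i) if $\alpha$ is known and $\delta(1-\alpha-\beta)^2\ge c$ for some positive constant $c$, the first pair satisfies $\hat\beta=\beta+O_p(N^{-1/2})$ and $\hat\delta=\delta+O_p(N^{-1/2})$; (ii) if $\beta$ is known and $(1-\delta)(1-\alpha-\beta)^2\ge c$ for some positive constant $c$, the second pair satisfies $\hat\alpha=\alpha+O_p(N^{-1/2})$ and $\hat\delta=\delta+O_p(N^{-1/2})$.
   Context: $\alpha$ and $\beta$ are the error rates: $\mathbb{P}(Y_{i,j}=1\mid A_{i,j}=0)=\alpha$, $\mathbb{P}(Y_{i,j}=0\mid A_{i,j}=1)=\beta$. *)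

theory Defs
  imports "HOL-Probability.Probability"
begin

definition noise_pmf :: "real \<Rightarrow> real \<Rightarrow> int pmf" where
  "noise_pmf a b = embed_pmf (\<lambda>x. if x = 1 then a else if x = -1 then b
                                    else if x = 0 then 1 - a - b else 0)"

definition pairs :: "nat \<Rightarrow> (nat \<times> nat) set" where
  "pairs p = {(i, j). i < j \<and> j < p}"

definition obs_entry :: "real \<Rightarrow> int \<Rightarrow> real" where
  "obs_entry a e = (if e = 0 then a else 0) + (if e = 1 then 1 else 0)"

text \<open>Joint law of the two independent noise arrays (eps for Y, eps_* for Y_*),
  each with independent entries indexed by the pairs i<j.\<close>
definition noise_model :: "nat \<Rightarrow> real \<Rightarrow> real \<Rightarrow>
    (((nat \<times> nat) \<Rightarrow> int) \<times> ((nat \<times> nat) \<Rightarrow> int)) pmf" where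
  "noise_model p a b = pair_pmf (Pi_pmf (pairs p) 0 (\<lambda>_. noise_pmf a b))
                                (Pi_pmf (pairs p) 0 (\<lambda>_. noise_pmf a b))"

definition edge_density :: "nat \<Rightarrow> (nat \<Rightarrow> nat \<Rightarrow> real) \<Rightarrow> real" where
  "edge_density p A = 2 / (real p * (real p - 1)) * (\<Sum>(i, j)\<in>pairs p. A i j)"

definition u1_hat :: "nat \<Rightarrow> (nat \<Rightarrow> nat \<Rightarrow> real) \<Rightarrow> ((nat \<times> nat) \<Rightarrow> int) \<Rightarrow> real" where
  "u1_hat p A e = 2 / (real p * (real p - 1)) * (\<Sum>(i, j)\<in>pairs p. obs_entry (A i j) (e (i, j)))"

definition u2_hat :: "nat \<Rightarrow> (nat \<Rightarrow> nat \<Rightarrow> real) \<Rightarrow> ((nat \<times> nat) \<Rightarrow> int) \<Rightarrow> ((nat \<times> nat) \<Rightarrow> int) \<Rightarrow> real" where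
  "u2_hat p A e es = 1 / (real p * (real p - 1)) *
     (\<Sum>(i, j)\<in>pairs p. \<bar>obs_entry (A i j) (es (i, j)) - obs_entry (A i j) (e (i, j))\<bar>)"

definition beta_hat :: "real \<Rightarrow> real \<Rightarrow> real \<Rightarrow> real" where
  "beta_hat a u1 u2 = (u2 - a + u1 * a) / (u1 - a)"
definition delta_hat_alpha :: "real \<Rightarrow> real \<Rightarrow> real \<Rightarrow> real" where
  "delta_hat_alpha a u1 u2 = (u1 - a)^2 / (u1 - u2 - 2 * u1 * a + a^2)"

definition alpha_hat :: "real \<Rightarrow> real \<Rightarrow> real \<Rightarrow> real" where
  "alpha_hat b u1 u2 = (u1 * b - u2) / (u1 + b - 1)"
definition delta_hat_beta :: "real \<Rightarrow> real \<Rightarrow> real \<Rightarrow> real" where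
  "delta_hat_beta b u1 u2 = (u1^2 - u1 + u2) / (u1 + u2 - 2 * u1 * b - (1 - b)^2)"

definition bigOp :: "(nat \<Rightarrow> 'a pmf) \<Rightarrow> (nat \<Rightarrow> 'a \<Rightarrow> real) \<Rightarrow> (nat \<Rightarrow> real) \<Rightarrow> bool" where
  "bigOp M X r \<longleftrightarrow> (\<forall>e>0. \<exists>K>0. eventually
      (\<lambda>p. measure_pmf.prob (M p) {\<omega>. \<bar>X p \<omega>\<bar> > K * r p} \<le> e) sequentially)"

end

theory Submission
  imports Defs "HOL-Real_Asymp.Real_Asymp"
begin

(* u1_hat and u2_hat are averages, over the N = p(p-1)/2 independent noise pairs (eps_ij, eps*_ij),
   of [0,1]-valued variables with means u1 = delta (1 - alpha - beta) + alpha and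
   u2 = delta beta (1 - beta) + (1 - delta) alpha (1 - alpha).  By Hoeffding's inequality both lie
   within t of their means outside an event of probability at most 4 exp (-2 N t^2).
   Each estimator is a quotient that returns the true parameter exactly at (u1, u2), with
   denominator there equal, up to sign, to delta (1 - alpha - beta)^k resp.
   (1 - delta) (1 - alpha - beta)^k for k = 1 or 2, hence at least c in absolute value; so
   for t <= c/8 the estimator moves by at most 10 t / c.  Taking t = K N^(-1/2) with K large
   gives the O_p(N^(-1/2)) rate. *)

definition u1_mean :: "real \<Rightarrow> real \<Rightarrow> real \<Rightarrow> real" where
  "u1_mean d a b = d * (1 - a - b) + a"

definition u2_mean :: "real \<Rightarrow> real \<Rightarrow> real \<Rightarrow> real" where
  "u2_mean d a b = d * (b * (1 - b)) + (1 - d) * (a * (1 - a))"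

lemma pmf_noise_pmf:
  assumes "a \<ge> 0" "b \<ge> 0" "a + b \<le> 1"
  shows "pmf (noise_pmf a b) x =
    (if x = 1 then a else if x = -1 then b else if x = 0 then 1 - a - b else 0)"
  unfolding noise_pmf_def
proof (rule pmf_embed_pmf)
  let ?f = "\<lambda>x::int. if x = 1 then a else if x = -1 then b else if x = 0 then 1 - a - b else 0"
  show "\<And>x. 0 \<le> ?f x"
    using assms by auto
  have "(\<integral>\<^sup>+x. ennreal (?f x) \<partial>count_space UNIV) = (\<Sum>x\<in>{-1, 0, 1}. ennreal (?f x))"
    by (rule nn_integral_count_space') auto
  also have "\<dots> = ennreal b + ennreal (1 - a - b) + ennreal a"
    by (simp add: add.assoc)
  also have "\<dots> = 1"
    using assms by (simp flip: ennreal_plus)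
  finally show "(\<integral>\<^sup>+x. ennreal (?f x) \<partial>count_space UNIV) = 1" .
qed

lemma expectation_pair_noise_pmf:
  fixes g :: "int \<times> int \<Rightarrow> real"
  assumes "a \<ge> 0" "b \<ge> 0" "a + b \<le> 1"
  shows "measure_pmf.expectation (pair_pmf (noise_pmf a b) (noise_pmf a b)) g =
    (\<Sum>x\<in>{-1, 0, 1}. \<Sum>y\<in>{-1, 0, 1}. pmf (noise_pmf a b) x * pmf (noise_pmf a b) y * g (x, y))"
proof -
  have "set_pmf (noise_pmf a b) \<subseteq> {-1, 0, 1}"
    using assms by (auto simp: set_pmf_eq pmf_noise_pmf split: if_splits)
  then have "measure_pmf.expectation (pair_pmf (noise_pmf a b) (noise_pmf a b)) g =
      (\<Sum>z\<in>{-1, 0, 1} \<times> {-1, 0, 1}. pmf (pair_pmf (noise_pmf a b) (noise_pmf a b)) z *\<^sub>R g z)"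
    by (intro integral_measure_pmf) auto
  then show ?thesis
    by (simp add: sum.cartesian_product pmf_pair)
qed

lemma expectation_obs_entry:
  assumes "a \<ge> 0" "b \<ge> 0" "a + b \<le> 1" "A \<in> {0, 1}"
  shows "measure_pmf.expectation (pair_pmf (noise_pmf a b) (noise_pmf a b))
      (\<lambda>e. obs_entry A (fst e)) = A * (1 - a - b) + a"
  using assms(4)
  by (auto simp: expectation_pair_noise_pmf[OF assms(1-3)] pmf_noise_pmf[OF assms(1-3)]
      obs_entry_def algebra_simps)

lemma expectation_half_abs_diff_obs_entry:
  assumes "a \<ge> 0" "b \<ge> 0" "a + b \<le> 1" "A \<in> {0, 1}"
  shows "measure_pmf.expectation (pair_pmf (noise_pmf a b) (noise_pmf a b))
      (\<lambda>e. \<bar>obs_entry A (snd e) - obs_entry A (fst e)\<bar> / 2)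
    = A * (b * (1 - b)) + (1 - A) * (a * (1 - a))"
  using assms(4)
  by (auto simp: expectation_pair_noise_pmf[OF assms(1-3)] pmf_noise_pmf[OF assms(1-3)]
      obs_entry_def field_simps)

lemma pair_pmf_Pi_pmf:
  assumes "finite S"
  shows "pair_pmf (Pi_pmf S d P) (Pi_pmf S d' Q) =
    map_pmf (\<lambda>f. (\<lambda>i. fst (f i), \<lambda>i. snd (f i))) (Pi_pmf S (d, d') (\<lambda>i. pair_pmf (P i) (Q i)))"
proof (rule pmf_eqI)
  fix z :: "('a \<Rightarrow> 'b) \<times> ('a \<Rightarrow> 'c)"
  obtain f g where z: "z = (f, g)" by (cases z)
  let ?unzip = "\<lambda>h. (\<lambda>i. fst (h i), \<lambda>i. snd (h i))"
  have "inj ?unzip"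
    by (auto simp: inj_def fun_eq_iff prod_eq_iff)
  then have "pmf (map_pmf ?unzip (Pi_pmf S (d, d') (\<lambda>i. pair_pmf (P i) (Q i)))) (?unzip (\<lambda>i. (f i, g i)))
      = pmf (Pi_pmf S (d, d') (\<lambda>i. pair_pmf (P i) (Q i))) (\<lambda>i. (f i, g i))"
    by (rule pmf_map_inj')
  also have "\<dots> = (if (\<forall>x. x \<notin> S \<longrightarrow> f x = d) \<and> (\<forall>x. x \<notin> S \<longrightarrow> g x = d') then
      (\<Prod>x\<in>S. pmf (P x) (f x)) * (\<Prod>x\<in>S. pmf (Q x) (g x)) else 0)"
    by (simp only: pmf_Pi[OF assms] pmf_pair prod.distrib prod.inject all_conj_distrib imp_conjR)
  also have "\<dots> = pmf (Pi_pmf S d P) f * pmf (Pi_pmf S d' Q) g"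
    by (simp only: pmf_Pi[OF assms]) auto
  finally show "pmf (pair_pmf (Pi_pmf S d P) (Pi_pmf S d' Q)) z =
      pmf (map_pmf ?unzip (Pi_pmf S (d, d') (\<lambda>i. pair_pmf (P i) (Q i)))) z"
    by (simp add: z pmf_pair)
qed

lemma Hoeffding_Pi_pmf_average:
  fixes h :: "'i \<Rightarrow> 'x \<Rightarrow> real"
  assumes fin: "finite S" and ne: "S \<noteq> {}" and bnd: "\<And>i x. i \<in> S \<Longrightarrow> h i x \<in> {0..1}"
    and t: "t \<ge> 0"
  shows "measure_pmf.prob (Pi_pmf S d Q)
      {f. t \<le> \<bar>(\<Sum>i\<in>S. h i (f i)) / card S - (\<Sum>i\<in>S. measure_pmf.expectation (Q i) (h i)) / card S\<bar>}
    \<le> 2 * exp (-2 * real (card S) * t\<^sup>2)"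
proof -
  let ?\<mu> = "\<Sum>i\<in>S. measure_pmf.expectation (Q i) (h i)"
  have n: "real (card S) > 0"
    using fin ne by (simp add: card_gt_0_iff)
  interpret H: Hoeffding_ineq "measure_pmf (Pi_pmf S d Q)" S "\<lambda>i f. h i (f i)" "\<lambda>_. 0" "\<lambda>_. 1" ?\<mu>
  proof unfold_locales
    show "prob_space.indep_vars (measure_pmf (Pi_pmf S d Q)) (\<lambda>_. borel) (\<lambda>i f. h i (f i)) S"
      by (intro prob_space.indep_vars_compose2[OF _ indep_vars_Pi_pmf[OF fin]])
         (auto simp: measure_pmf.prob_space_axioms)
    have "measure_pmf.expectation (Pi_pmf S d Q) (\<lambda>f. h i (f i)) = measure_pmf.expectation (Q i) (h i)"
      if "i \<in> S" for i
    proof -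
      have "measure_pmf.expectation (Pi_pmf S d Q) (\<lambda>f. h i (f i)) =
          measure_pmf.expectation (map_pmf (\<lambda>f. f i) (Pi_pmf S d Q)) (h i)"
        by simp
      also have "map_pmf (\<lambda>f. f i) (Pi_pmf S d Q) = Q i"
        using fin that by (simp add: Pi_pmf_component)
      finally show ?thesis .
    qed
    then show "?\<mu> \<equiv> (\<Sum>i\<in>S. measure_pmf.expectation (Pi_pmf S d Q) (\<lambda>f. h i (f i)))"
      by simp
    show "AE f in measure_pmf (Pi_pmf S d Q). h i (f i) \<in> {0..1}" if "i \<in> S" for i
      using bnd[OF that] by simp
  qed (fact fin)
  have "t \<le> \<bar>u / card S - v / card S\<bar> \<longleftrightarrow> real (card S) * t \<le> \<bar>u - v\<bar>" for u v :: real
  proof -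
    have "\<bar>u / card S - v / card S\<bar> = \<bar>u - v\<bar> / card S"
      using n by (simp add: abs_divide flip: diff_divide_distrib)
    then show ?thesis
      using n by (simp add: le_divide_eq mult.commute)
  qed
  then have "{f. t \<le> \<bar>(\<Sum>i\<in>S. h i (f i)) / card S - ?\<mu> / card S\<bar>} =
      {f \<in> space (measure_pmf (Pi_pmf S d Q)). real (card S) * t \<le> \<bar>(\<Sum>i\<in>S. h i (f i)) - ?\<mu>\<bar>}"
    by simp
  also have "measure_pmf.prob (Pi_pmf S d Q) \<dots> \<le> 2 * exp (-2 * (real (card S) * t)\<^sup>2 / (\<Sum>i\<in>S. (1 - 0)\<^sup>2))"
    by (rule H.Hoeffding_ineq_abs_ge) (use t n in auto)
  also have "-2 * (real (card S) * t)\<^sup>2 / (\<Sum>i\<in>S. (1 - 0)\<^sup>2) = -2 * real (card S) * t\<^sup>2"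
    using n by (simp add: power2_eq_square)
  finally show ?thesis .
qed

lemma finite_pairs: "finite (pairs p)"
  by (rule finite_subset[of _ "{..<p} \<times> {..<p}"]) (auto simp: pairs_def)

lemma card_pairs: "real (card (pairs p)) = real p * (real p - 1) / 2"
proof (induction p)
  case 0
  then show ?case by (simp add: pairs_def)
next
  case (Suc p)
  have "pairs (Suc p) = pairs p \<union> (\<lambda>i. (i, p)) ` {..<p}"
    by (auto simp: pairs_def less_Suc_eq)
  moreover have "pairs p \<inter> (\<lambda>i. (i, p)) ` {..<p} = {}"
    by (auto simp: pairs_def)
  ultimately have "card (pairs (Suc p)) = card (pairs p) + card ((\<lambda>i. (i, p)) ` {..<p})"
    by (simp add: card_Un_disjoint finite_pairs)
  also have "card ((\<lambda>i. (i, p)) ` {..<p}) = p"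
    by (subst card_image) (auto simp: inj_on_def)
  finally show ?case
    using Suc.IH by (simp add: algebra_simps)
qed

lemma pairs_nonempty:
  assumes "p \<ge> 2"
  shows "pairs p \<noteq> {}"
proof -
  have "(0, 1) \<in> pairs p"
    using assms by (simp add: pairs_def)
  then show ?thesis by blast
qed

lemma edge_density_eq_average:
  "edge_density p A = (\<Sum>(i, j)\<in>pairs p. A i j) / card (pairs p)"
  unfolding edge_density_def card_pairs by simp

lemma u1_hat_eq_average:
  "u1_hat p A e = (\<Sum>(i, j)\<in>pairs p. obs_entry (A i j) (e (i, j))) / card (pairs p)"
  unfolding u1_hat_def card_pairs by simp

lemma u2_hat_eq_average:
  "u2_hat p A e e' =
    (\<Sum>(i, j)\<in>pairs p. \<bar>obs_entry (A i j) (e' (i, j)) - obs_entry (A i j) (e (i, j))\<bar> / 2)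
      / card (pairs p)"
  unfolding u2_hat_def card_pairs by (simp add: split_def flip: sum_divide_distrib)

lemma edge_density_bounds:
  assumes "\<And>i j. i < p \<Longrightarrow> j < p \<Longrightarrow> A i j \<in> {0, 1}"
  shows "0 \<le> edge_density p A" "edge_density p A \<le> 1"
proof -
  have A: "0 \<le> A i j \<and> A i j \<le> 1" if "(i, j) \<in> pairs p" for i j
    using assms[of i j] that by (auto simp: pairs_def)
  have "0 \<le> (\<Sum>(i, j)\<in>pairs p. A i j)" "(\<Sum>(i, j)\<in>pairs p. A i j) \<le> card (pairs p)"
    using sum_mono[of "pairs p" "\<lambda>(i, j). A i j" "\<lambda>_. 1"] A
    by (auto intro: sum_nonneg)
  then show "0 \<le> edge_density p A" "edge_density p A \<le> 1"
    unfolding edge_density_eq_average by (auto simp: divide_le_eq_1)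
qed

lemma average_mixture:
  assumes "finite S" "S \<noteq> {}"
  shows "(\<Sum>x\<in>S. f x * k + (1 - f x) * m) / card S =
    (\<Sum>x\<in>S. f x) / card S * k + (1 - (\<Sum>x\<in>S. f x) / card S) * m"
  using assms by (simp add: sum.distrib sum_subtractf flip: sum_distrib_right)
    (simp add: field_simps)

lemma abs_div_sub_le:
  fixes x y D k t c :: real
  assumes num: "\<bar>x - y * D\<bar> \<le> k * t" and den: "c / 2 \<le> \<bar>D\<bar>" and c: "c > 0"
  shows "\<bar>x / D - y\<bar> \<le> 2 * k * t / c"
proof -
  have "D \<noteq> 0"
    using den c by auto
  then have "x / D - y = (x - y * D) / D"
    by (simp add: field_simps)
  then have "\<bar>x / D - y\<bar> = \<bar>x - y * D\<bar> / \<bar>D\<bar>"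
    by (simp add: abs_divide)
  also have "\<dots> \<le> k * t / (c / 2)"
    by (rule frac_le) (use num den c in auto)
  finally show ?thesis
    by (simp add: ac_simps)
qed

lemma abs_mult_le_mult:
  fixes x y m n :: real
  shows "\<bar>x\<bar> \<le> m \<Longrightarrow> \<bar>y\<bar> \<le> n \<Longrightarrow> \<bar>x * y\<bar> \<le> m * n"
  using mult_mono[of "\<bar>x\<bar>" m "\<bar>y\<bar>" n] by (simp add: abs_mult)

context
  fixes a b d c t u1 u2 :: real
  assumes ab: "a \<ge> 0" "b \<ge> 0" "a + b \<le> 1" and d: "0 \<le> d" "d \<le> 1"
    and c: "c > 0" and t: "0 \<le> t" "t \<le> c / 8"
    and u1: "\<bar>u1 - u1_mean d a b\<bar> \<le> t" and u2: "\<bar>u2 - u2_mean d a b\<bar> \<le> t"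
begin

lemma beta_hat_error:
  assumes cd: "c \<le> d * (1 - a - b)\<^sup>2"
  shows "\<bar>beta_hat a u1 u2 - b\<bar> \<le> 4 * t / c"
proof -
  define s e1 e2 where "s = 1 - a - b" and "e1 = u1 - u1_mean d a b" and "e2 = u2 - u2_mean d a b"
  have "d * s\<^sup>2 \<le> d * s"
    using ab d by (simp add: s_def power2_eq_square mult_left_le_one_le mult_left_mono)
  then have "c / 2 \<le> \<bar>u1 - a\<bar>"
    using cd u1 t by (simp add: s_def u1_mean_def)
  moreover have "\<bar>u2 - a + u1 * a - b * (u1 - a)\<bar> \<le> 2 * t"
  proof -
    have "u2 - a + u1 * a - b * (u1 - a) = e2 + (a - b) * e1"
      by (simp add: e1_def e2_def u1_mean_def u2_mean_def algebra_simps)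
    moreover have "\<bar>(a - b) * e1\<bar> \<le> 1 * t"
      using ab u1 by (intro abs_mult_le_mult) (auto simp: e1_def)
    ultimately show ?thesis
      using u2 by (simp add: e2_def)
  qed
  ultimately show ?thesis
    using abs_div_sub_le c unfolding beta_hat_def by fastforce
qed

lemma delta_hat_alpha_error:
  assumes cd: "c \<le> d * (1 - a - b)\<^sup>2"
  shows "\<bar>delta_hat_alpha a u1 u2 - d\<bar> \<le> 10 * t / c"
proof -
  define s e1 e2 where "s = 1 - a - b" and "e1 = u1 - u1_mean d a b" and "e2 = u2 - u2_mean d a b"
  define E where "E = u1 - u2 - 2 * u1 * a + a\<^sup>2"
  have s: "0 \<le> s" "s \<le> 1" and ds: "0 \<le> d * s" "d * s \<le> 1"
    using ab d by (auto simp: s_def mult_le_one)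
  have "d * s\<^sup>2 \<le> 1"
    using d s by (simp add: mult_le_one power_le_one)
  then have e: "\<bar>e1\<bar> \<le> t" "\<bar>e2\<bar> \<le> t" "t \<le> 1"
    using u1 u2 t cd by (simp_all add: e1_def e2_def s_def)
  have E_eq: "E = d * s\<^sup>2 + ((1 - 2 * a) * e1 - e2)"
    by (simp add: E_def e1_def e2_def s_def u1_mean_def u2_mean_def algebra_simps power2_eq_square)
  have "\<bar>(1 - 2 * a) * e1\<bar> \<le> 1 * t"
    using ab e by (intro abs_mult_le_mult) auto
  then have err: "\<bar>(1 - 2 * a) * e1 - e2\<bar> \<le> 2 * t"
    using e by linarith
  then have "c / 2 \<le> \<bar>E\<bar>"
    using E_eq cd t by (simp add: s_def)
  moreover have "\<bar>(u1 - a)\<^sup>2 - d * E\<bar> \<le> 5 * t"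
  proof -
    have "(u1 - a)\<^sup>2 - d * E = e1 * (2 * d * s + e1) - d * ((1 - 2 * a) * e1 - e2)"
      by (simp add: E_eq e1_def s_def u1_mean_def algebra_simps power2_eq_square)
    moreover have "\<bar>e1 * (2 * d * s + e1)\<bar> \<le> t * 3"
      using ds e by (intro abs_mult_le_mult) auto
    moreover have "\<bar>d * ((1 - 2 * a) * e1 - e2)\<bar> \<le> 1 * (2 * t)"
      using d err by (intro abs_mult_le_mult) auto
    ultimately show ?thesis
      by linarith
  qed
  ultimately show ?thesis
    using abs_div_sub_le c unfolding delta_hat_alpha_def E_def by fastforce
qed

lemma alpha_hat_error:
  assumes cd: "c \<le> (1 - d) * (1 - a - b)\<^sup>2"
  shows "\<bar>alpha_hat b u1 u2 - a\<bar> \<le> 4 * t / c"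
proof -
  define s e1 e2 where "s = 1 - a - b" and "e1 = u1 - u1_mean d a b" and "e2 = u2 - u2_mean d a b"
  have "(1 - d) * s\<^sup>2 \<le> (1 - d) * s"
    using ab d by (simp add: s_def power2_eq_square mult_left_le_one_le mult_left_mono)
  moreover have "u1 + b - 1 = e1 - (1 - d) * s"
    by (simp add: e1_def s_def u1_mean_def algebra_simps)
  ultimately have "c / 2 \<le> \<bar>u1 + b - 1\<bar>"
    using cd u1 t by (simp add: e1_def s_def)
  moreover have "\<bar>u1 * b - u2 - a * (u1 + b - 1)\<bar> \<le> 2 * t"
  proof -
    have "u1 * b - u2 - a * (u1 + b - 1) = (b - a) * e1 - e2"
      by (simp add: e1_def e2_def u1_mean_def u2_mean_def algebra_simps)
    moreover have "\<bar>(b - a) * e1\<bar> \<le> 1 * t"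
      using ab u1 by (intro abs_mult_le_mult) (auto simp: e1_def)
    ultimately show ?thesis
      using u2 by (simp add: e2_def)
  qed
  ultimately show ?thesis
    using abs_div_sub_le c unfolding alpha_hat_def by fastforce
qed

lemma delta_hat_beta_error:
  assumes cd: "c \<le> (1 - d) * (1 - a - b)\<^sup>2"
  shows "\<bar>delta_hat_beta b u1 u2 - d\<bar> \<le> 10 * t / c"
proof -
  define s e1 e2 where "s = 1 - a - b" and "e1 = u1 - u1_mean d a b" and "e2 = u2 - u2_mean d a b"
  define G where "G = u1 + u2 - 2 * u1 * b - (1 - b)\<^sup>2"
  have s: "0 \<le> s" "s \<le> 1" and ds: "0 \<le> d * s" "d * s \<le> s"
    using ab d by (auto simp: s_def mult_left_le_one_le)
  have "(1 - d) * s\<^sup>2 \<le> 1"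
    using d s by (simp add: mult_le_one power_le_one)
  then have e: "\<bar>e1\<bar> \<le> t" "\<bar>e2\<bar> \<le> t" "t \<le> 1"
    using u1 u2 t cd by (simp_all add: e1_def e2_def s_def)
  have G_eq: "G = ((1 - 2 * b) * e1 + e2) - (1 - d) * s\<^sup>2"
    by (simp add: G_def e1_def e2_def s_def u1_mean_def u2_mean_def algebra_simps power2_eq_square)
  have "\<bar>(1 - 2 * b) * e1\<bar> \<le> 1 * t"
    using ab e by (intro abs_mult_le_mult) auto
  then have err: "\<bar>(1 - 2 * b) * e1 + e2\<bar> \<le> 2 * t"
    using e by linarith
  then have "c / 2 \<le> \<bar>G\<bar>"
    using G_eq cd t by (simp add: s_def)
  moreover have "\<bar>(u1\<^sup>2 - u1 + u2) - d * G\<bar> \<le> 5 * t"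
  proof -
    have "(u1\<^sup>2 - u1 + u2) - d * G =
        e1 * (2 * (d * s + a) - 1 + e1) + e2 - d * ((1 - 2 * b) * e1 + e2)"
      by (simp add: G_eq e1_def e2_def s_def u1_mean_def u2_mean_def algebra_simps power2_eq_square)
    moreover have "\<bar>e1 * (2 * (d * s + a) - 1 + e1)\<bar> \<le> t * 2"
      using ds e ab by (intro abs_mult_le_mult) (auto simp: s_def)
    moreover have "\<bar>d * ((1 - 2 * b) * e1 + e2)\<bar> \<le> 1 * (2 * t)"
      using d err by (intro abs_mult_le_mult) auto
    ultimately show ?thesis
      using e by linarith
  qed
  ultimately show ?thesis
    using abs_div_sub_le c unfolding delta_hat_beta_def G_def by fastforce
qed

end

lemma average_expectation_obs_entry:
  fixes A :: "nat \<Rightarrow> nat \<Rightarrow> real"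
  assumes p: "p \<ge> 2" and A01: "\<And>i j. i < p \<Longrightarrow> j < p \<Longrightarrow> A i j \<in> {0, 1}"
    and ab: "a \<ge> 0" "b \<ge> 0" "a + b \<le> 1"
  shows "(\<Sum>x\<in>pairs p. measure_pmf.expectation (pair_pmf (noise_pmf a b) (noise_pmf a b))
        (\<lambda>e. obs_entry (A (fst x) (snd x)) (fst e))) / card (pairs p)
      = u1_mean (edge_density p A) a b"
    and "(\<Sum>x\<in>pairs p. measure_pmf.expectation (pair_pmf (noise_pmf a b) (noise_pmf a b))
        (\<lambda>e. \<bar>obs_entry (A (fst x) (snd x)) (snd e) - obs_entry (A (fst x) (snd x)) (fst e)\<bar> / 2))
        / card (pairs p)
      = u2_mean (edge_density p A) a b"
proof -
  have S: "finite (pairs p)" "pairs p \<noteq> {}"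
    using finite_pairs pairs_nonempty[OF p] by auto
  have AS: "A (fst x) (snd x) \<in> {0, 1}" if "x \<in> pairs p" for x
    using A01[of "fst x" "snd x"] that by (auto simp: pairs_def)
  define D where "D = (\<Sum>x\<in>pairs p. A (fst x) (snd x)) / card (pairs p)"
  have density: "edge_density p A = D"
    by (simp add: D_def edge_density_eq_average split_def)
  have "(\<Sum>x\<in>pairs p. measure_pmf.expectation (pair_pmf (noise_pmf a b) (noise_pmf a b))
        (\<lambda>e. obs_entry (A (fst x) (snd x)) (fst e))) =
      (\<Sum>x\<in>pairs p. A (fst x) (snd x) * (1 - b) + (1 - A (fst x) (snd x)) * a)"
    using expectation_obs_entry[OF ab AS] by (intro sum.cong) (auto simp: algebra_simps)
  then show "(\<Sum>x\<in>pairs p. measure_pmf.expectation (pair_pmf (noise_pmf a b) (noise_pmf a b))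
        (\<lambda>e. obs_entry (A (fst x) (snd x)) (fst e))) / card (pairs p)
      = u1_mean (edge_density p A) a b"
    by (simp only: average_mixture[OF S] density u1_mean_def D_def[symmetric]) (simp add: algebra_simps)
  have "(\<Sum>x\<in>pairs p. measure_pmf.expectation (pair_pmf (noise_pmf a b) (noise_pmf a b))
        (\<lambda>e. \<bar>obs_entry (A (fst x) (snd x)) (snd e) - obs_entry (A (fst x) (snd x)) (fst e)\<bar> / 2)) =
      (\<Sum>x\<in>pairs p. A (fst x) (snd x) * (b * (1 - b)) + (1 - A (fst x) (snd x)) * (a * (1 - a)))"
    using expectation_half_abs_diff_obs_entry[OF ab AS] by (intro sum.cong) auto
  then show "(\<Sum>x\<in>pairs p. measure_pmf.expectation (pair_pmf (noise_pmf a b) (noise_pmf a b))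
        (\<lambda>e. \<bar>obs_entry (A (fst x) (snd x)) (snd e) - obs_entry (A (fst x) (snd x)) (fst e)\<bar> / 2))
        / card (pairs p)
      = u2_mean (edge_density p A) a b"
    by (simp only: average_mixture[OF S] density u2_mean_def D_def[symmetric])
qed

lemma prob_u_hat_deviation:
  fixes A :: "nat \<Rightarrow> nat \<Rightarrow> real"
  assumes p: "p \<ge> 2" and A01: "\<And>i j. i < p \<Longrightarrow> j < p \<Longrightarrow> A i j \<in> {0, 1}"
    and ab: "a \<ge> 0" "b \<ge> 0" "a + b \<le> 1" and t: "t \<ge> 0"
  shows "measure_pmf.prob (noise_model p a b)
      {\<omega>. t \<le> \<bar>u1_hat p A (fst \<omega>) - u1_mean (edge_density p A) a b\<bar> \<or>
          t \<le> \<bar>u2_hat p A (fst \<omega>) (snd \<omega>) - u2_mean (edge_density p A) a b\<bar>}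
    \<le> 4 * exp (-2 * (real p * (real p - 1) / 2) * t\<^sup>2)"
proof -
  define S Q where "S = pairs p" and "Q = pair_pmf (noise_pmf a b) (noise_pmf a b)"
  define h1 h2 :: "nat \<times> nat \<Rightarrow> int \<times> int \<Rightarrow> real"
    where "h1 = (\<lambda>x e. obs_entry (A (fst x) (snd x)) (fst e))"
      and "h2 = (\<lambda>x e. \<bar>obs_entry (A (fst x) (snd x)) (snd e) - obs_entry (A (fst x) (snd x)) (fst e)\<bar> / 2)"
  define avg :: "(nat \<times> nat \<Rightarrow> int \<times> int \<Rightarrow> real) \<Rightarrow> (nat \<times> nat \<Rightarrow> int \<times> int) \<Rightarrow> real"
    where "avg h f = (\<Sum>x\<in>S. h x (f x)) / card S" for h f
  define mean :: "(nat \<times> nat \<Rightarrow> int \<times> int \<Rightarrow> real) \<Rightarrow> real"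
    where "mean h = (\<Sum>x\<in>S. measure_pmf.expectation Q (h x)) / card S" for h
  define unzip :: "(nat \<times> nat \<Rightarrow> int \<times> int) \<Rightarrow> _"
    where "unzip f = (\<lambda>x. fst (f x), \<lambda>x. snd (f x))" for f
  have S: "finite S" "S \<noteq> {}"
    using finite_pairs pairs_nonempty[OF p] by (auto simp: S_def)
  have h: "h1 x e \<in> {0..1}" "h2 x e \<in> {0..1}" if "x \<in> S" for x e
    using A01[of "fst x" "snd x"] that
    by (auto simp: h1_def h2_def S_def pairs_def obs_entry_def)
  have Hoeffding: "measure_pmf.prob (Pi_pmf S (0, 0) (\<lambda>_. Q)) {f. t \<le> \<bar>avg h f - mean h\<bar>}
      \<le> 2 * exp (-2 * real (card S) * t\<^sup>2)" if "\<And>x e. x \<in> S \<Longrightarrow> h x e \<in> {0..1}" for h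
    using Hoeffding_Pi_pmf_average[OF S that t] unfolding avg_def mean_def .
  \<comment> \<open>Zipped, the two noise arrays form one array of independent noise pairs.\<close>
  have model: "noise_model p a b = map_pmf unzip (Pi_pmf S (0, 0) (\<lambda>_. Q))"
    unfolding noise_model_def S_def Q_def unzip_def by (rule pair_pmf_Pi_pmf[OF finite_pairs])
  have u_hat: "u1_hat p A (fst (unzip f)) = avg h1 f"
    "u2_hat p A (fst (unzip f)) (snd (unzip f)) = avg h2 f" for f
    by (simp_all add: avg_def h1_def h2_def S_def unzip_def u1_hat_eq_average u2_hat_eq_average split_def)
  have mean: "mean h1 = u1_mean (edge_density p A) a b" "mean h2 = u2_mean (edge_density p A) a b"
    using average_expectation_obs_entry[OF p A01 ab] by (simp_all add: mean_def h1_def h2_def S_def Q_def)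
  have "measure_pmf.prob (noise_model p a b)
      {\<omega>. t \<le> \<bar>u1_hat p A (fst \<omega>) - u1_mean (edge_density p A) a b\<bar> \<or>
          t \<le> \<bar>u2_hat p A (fst \<omega>) (snd \<omega>) - u2_mean (edge_density p A) a b\<bar>}
    = measure_pmf.prob (Pi_pmf S (0, 0) (\<lambda>_. Q))
      ({f. t \<le> \<bar>avg h1 f - mean h1\<bar>} \<union> {f. t \<le> \<bar>avg h2 f - mean h2\<bar>})"
    unfolding model measure_map_pmf
    by (rule arg_cong[where f = "measure_pmf.prob _"])
      (simp only: set_eq_iff vimage_eq mem_Collect_eq Un_iff u_hat mean simp_thms)
  also have "\<dots> \<le> measure_pmf.prob (Pi_pmf S (0, 0) (\<lambda>_. Q)) {f. t \<le> \<bar>avg h1 f - mean h1\<bar>}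
      + measure_pmf.prob (Pi_pmf S (0, 0) (\<lambda>_. Q)) {f. t \<le> \<bar>avg h2 f - mean h2\<bar>}"
    by (rule measure_Un_le) auto
  also have "\<dots> \<le> 2 * exp (-2 * real (card S) * t\<^sup>2) + 2 * exp (-2 * real (card S) * t\<^sup>2)"
    by (intro add_mono Hoeffding h)
  finally show ?thesis
    by (simp add: S_def card_pairs)
qed

lemma bigOp_of_exponential_tail:
  fixes M :: "nat \<Rightarrow> 'a pmf" and X :: "nat \<Rightarrow> 'a \<Rightarrow> real"
  assumes C: "C > 0" and T: "T > 0" and B: "B \<ge> 0"
    and tail: "\<forall>\<^sub>F p in sequentially. \<forall>t. 0 \<le> t \<longrightarrow> t \<le> T \<longrightarrow>
      measure_pmf.prob (M p) {\<omega>. C * t < \<bar>X p \<omega>\<bar>} \<le> B * exp (-2 * (real p * (real p - 1) / 2) * t\<^sup>2)"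
  shows "bigOp M X (\<lambda>p. (real p * (real p - 1) / 2) powr (-1/2))"
  unfolding bigOp_def
proof (intro allI impI)
  fix e :: real
  assume e: "e > 0"
  \<comment> \<open>At t = K N^(-1/2) the tail bound is B exp (-2 K^2) \<le> B / (2 K^2) \<le> e.\<close>
  define K where "K = 1 + B / e"
  define N r where "N p = real p * (real p - 1) / 2" and "r p = N p powr (-1/2)" for p :: nat
  have K: "K \<ge> 1" "B \<le> e * K\<^sup>2"
    using e B by (auto simp: K_def power2_eq_square field_simps)
  have "r \<longlonglongrightarrow> 0"
    unfolding r_def N_def by real_asymp
  then have "\<forall>\<^sub>F p in sequentially. r p < T / K"
    using T K by (intro order_tendstoD) auto
  with tail eventually_ge_at_top[of 2]
  have "\<forall>\<^sub>F p in sequentially. measure_pmf.prob (M p) {\<omega>. C * K * r p < \<bar>X p \<omega>\<bar>} \<le> e"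
  proof eventually_elim
    case (elim p)
    have N: "N p > 0"
      using elim by (simp add: N_def)
    have "0 \<le> K * r p" "K * r p \<le> T"
      using elim K by (auto simp: r_def field_simps)
    with elim(1) have "measure_pmf.prob (M p) {\<omega>. C * (K * r p) < \<bar>X p \<omega>\<bar>}
        \<le> B * exp (-2 * N p * (K * r p)\<^sup>2)"
      unfolding N_def by blast
    also have "-2 * N p * (K * r p)\<^sup>2 = -2 * K\<^sup>2"
      using N by (simp add: r_def power_mult_distrib powr_powr flip: powr_realpow)
    also have "B * exp (-2 * K\<^sup>2) = B / exp (2 * K\<^sup>2)"
      by (simp add: exp_minus divide_inverse)
    also have "\<dots> \<le> B / (2 * K\<^sup>2)"
    proof (rule divide_left_mono)
      show "2 * K\<^sup>2 \<le> exp (2 * K\<^sup>2)"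
        using exp_ge_add_one_self[of "2 * K\<^sup>2"] by linarith
    qed (use B K in auto)
    also have "\<dots> \<le> e"
    proof -
      have "0 \<le> e * K\<^sup>2"
        using e by simp
      then have "B \<le> 2 * (e * K\<^sup>2)"
        using K by linarith
      then show ?thesis
        using K e by (simp add: field_simps)
    qed
    finally show ?case
      by (simp add: mult.assoc)
  qed
  then show "\<exists>K>0. \<forall>\<^sub>F p in sequentially.
      measure_pmf.prob (M p) {\<omega>. K * (real p * (real p - 1) / 2) powr (-1/2) < \<bar>X p \<omega>\<bar>} \<le> e"
    using C K by (intro exI[of _ "C * K"]) (auto simp: r_def N_def)
qed

lemma prob_estimator_deviation:
  fixes A :: "nat \<Rightarrow> nat \<Rightarrow> real" and g :: "real \<Rightarrow> real \<Rightarrow> real"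
  assumes p: "p \<ge> 2" and A01: "\<And>i j. i < p \<Longrightarrow> j < p \<Longrightarrow> A i j \<in> {0, 1}"
    and ab: "a \<ge> 0" "b \<ge> 0" "a + b \<le> 1" and t: "t \<ge> 0"
    and stable: "\<And>u1 u2. \<bar>u1 - u1_mean (edge_density p A) a b\<bar> \<le> t \<Longrightarrow>
      \<bar>u2 - u2_mean (edge_density p A) a b\<bar> \<le> t \<Longrightarrow> \<bar>g u1 u2\<bar> \<le> C * t"
  shows "measure_pmf.prob (noise_model p a b)
      {\<omega>. C * t < \<bar>g (u1_hat p A (fst \<omega>)) (u2_hat p A (fst \<omega>) (snd \<omega>))\<bar>}
    \<le> 4 * exp (-2 * (real p * (real p - 1) / 2) * t\<^sup>2)"
proof -
  have "{\<omega>. C * t < \<bar>g (u1_hat p A (fst \<omega>)) (u2_hat p A (fst \<omega>) (snd \<omega>))\<bar>} \<subseteq>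
      {\<omega>. t \<le> \<bar>u1_hat p A (fst \<omega>) - u1_mean (edge_density p A) a b\<bar> \<or>
          t \<le> \<bar>u2_hat p A (fst \<omega>) (snd \<omega>) - u2_mean (edge_density p A) a b\<bar>}"
  proof (rule subsetI, rule ccontr)
    fix \<omega>
    assume "\<omega> \<in> {\<omega>. C * t < \<bar>g (u1_hat p A (fst \<omega>)) (u2_hat p A (fst \<omega>) (snd \<omega>))\<bar>}"
      and "\<omega> \<notin> {\<omega>. t \<le> \<bar>u1_hat p A (fst \<omega>) - u1_mean (edge_density p A) a b\<bar> \<or>
          t \<le> \<bar>u2_hat p A (fst \<omega>) (snd \<omega>) - u2_mean (edge_density p A) a b\<bar>}"
    then show False
      using stable[of "u1_hat p A (fst \<omega>)" "u2_hat p A (fst \<omega>) (snd \<omega>)"] by auto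
  qed
  then have "measure_pmf.prob (noise_model p a b)
      {\<omega>. C * t < \<bar>g (u1_hat p A (fst \<omega>)) (u2_hat p A (fst \<omega>) (snd \<omega>))\<bar>} \<le>
    measure_pmf.prob (noise_model p a b)
      {\<omega>. t \<le> \<bar>u1_hat p A (fst \<omega>) - u1_mean (edge_density p A) a b\<bar> \<or>
          t \<le> \<bar>u2_hat p A (fst \<omega>) (snd \<omega>) - u2_mean (edge_density p A) a b\<bar>}"
    by (rule measure_pmf.finite_measure_mono) simp
  also have "\<dots> \<le> 4 * exp (-2 * (real p * (real p - 1) / 2) * t\<^sup>2)"
    by (rule prob_u_hat_deviation[OF p A01 ab t])
  finally show ?thesis .
qed

lemma bigOp_noise_model_estimator:
  fixes A :: "nat \<Rightarrow> nat \<Rightarrow> nat \<Rightarrow> real" and \<alpha> \<beta> :: "nat \<Rightarrow> real"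
    and g :: "nat \<Rightarrow> real \<Rightarrow> real \<Rightarrow> real"
  assumes A01: "\<And>p i j. i < p \<Longrightarrow> j < p \<Longrightarrow> A p i j \<in> {0, 1}"
    and ab: "\<And>p. \<alpha> p \<ge> 0" "\<And>p. \<beta> p \<ge> 0" "\<And>p. \<alpha> p + \<beta> p \<le> 1"
    and C: "C > 0" and T: "T > 0"
    and stable: "\<forall>\<^sub>F p in sequentially. \<forall>u1 u2 t. 0 \<le> t \<longrightarrow> t \<le> T \<longrightarrow>
      \<bar>u1 - u1_mean (edge_density p (A p)) (\<alpha> p) (\<beta> p)\<bar> \<le> t \<longrightarrow>
      \<bar>u2 - u2_mean (edge_density p (A p)) (\<alpha> p) (\<beta> p)\<bar> \<le> t \<longrightarrow> \<bar>g p u1 u2\<bar> \<le> C * t"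
  shows "bigOp (\<lambda>p. noise_model p (\<alpha> p) (\<beta> p))
    (\<lambda>p \<omega>. g p (u1_hat p (A p) (fst \<omega>)) (u2_hat p (A p) (fst \<omega>) (snd \<omega>)))
    (\<lambda>p. (real p * (real p - 1) / 2) powr (-1/2))"
proof (rule bigOp_of_exponential_tail[OF C T, of 4])
  show "\<forall>\<^sub>F p in sequentially. \<forall>t. 0 \<le> t \<longrightarrow> t \<le> T \<longrightarrow>
      measure_pmf.prob (noise_model p (\<alpha> p) (\<beta> p))
        {\<omega>. C * t < \<bar>g p (u1_hat p (A p) (fst \<omega>)) (u2_hat p (A p) (fst \<omega>) (snd \<omega>))\<bar>}
      \<le> 4 * exp (-2 * (real p * (real p - 1) / 2) * t\<^sup>2)"
    using stable eventually_ge_at_top[of 2]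
    by eventually_elim (intro allI impI prob_estimator_deviation; use A01 ab in auto)
qed simp

theorem proposition1:
  fixes A :: "nat \<Rightarrow> nat \<Rightarrow> nat \<Rightarrow> real"
    and \<alpha> \<beta> :: "nat \<Rightarrow> real"
  assumes A01: "\<And>p i j. i < p \<Longrightarrow> j < p \<Longrightarrow> A p i j \<in> {0, 1}"
    and Asym: "\<And>p i j. i < p \<Longrightarrow> j < p \<Longrightarrow> A p i j = A p j i"
    and Adiag: "\<And>p i. i < p \<Longrightarrow> A p i i = 0"
    and alpha_nn: "\<And>p. \<alpha> p \<ge> 0"
    and beta_nn: "\<And>p. \<beta> p \<ge> 0"
    and ab_le: "\<And>p. \<alpha> p + \<beta> p \<le> 1"
    and N1: "filterlim (\<lambda>p. real p * (real p - 1) * edge_density p (A p)) at_top sequentially"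
    and N2: "filterlim (\<lambda>p. real p * (real p - 1) * (1 - edge_density p (A p))) at_top sequentially"
  shows
   "((\<exists>c>0. eventually (\<lambda>p. edge_density p (A p) * (1 - \<alpha> p - \<beta> p)^2 \<ge> c) sequentially) \<longrightarrow>
       bigOp (\<lambda>p. noise_model p (\<alpha> p) (\<beta> p))
         (\<lambda>p \<omega>. beta_hat (\<alpha> p) (u1_hat p (A p) (fst \<omega>)) (u2_hat p (A p) (fst \<omega>) (snd \<omega>)) - \<beta> p)
         (\<lambda>p. (real p * (real p - 1) / 2) powr (-1/2))
     \<and> bigOp (\<lambda>p. noise_model p (\<alpha> p) (\<beta> p))
         (\<lambda>p \<omega>. delta_hat_alpha (\<alpha> p) (u1_hat p (A p) (fst \<omega>)) (u2_hat p (A p) (fst \<omega>) (snd \<omega>))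
                  - edge_density p (A p))
         (\<lambda>p. (real p * (real p - 1) / 2) powr (-1/2)))
    \<and>
    ((\<exists>c>0. eventually (\<lambda>p. (1 - edge_density p (A p)) * (1 - \<alpha> p - \<beta> p)^2 \<ge> c) sequentially) \<longrightarrow>
       bigOp (\<lambda>p. noise_model p (\<alpha> p) (\<beta> p))
         (\<lambda>p \<omega>. alpha_hat (\<beta> p) (u1_hat p (A p) (fst \<omega>)) (u2_hat p (A p) (fst \<omega>) (snd \<omega>)) - \<alpha> p)
         (\<lambda>p. (real p * (real p - 1) / 2) powr (-1/2))
     \<and> bigOp (\<lambda>p. noise_model p (\<alpha> p) (\<beta> p))
         (\<lambda>p \<omega>. delta_hat_beta (\<beta> p) (u1_hat p (A p) (fst \<omega>)) (u2_hat p (A p) (fst \<omega>) (snd \<omega>))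
                  - edge_density p (A p))
         (\<lambda>p. (real p * (real p - 1) / 2) powr (-1/2)))"
proof -
  let ?M = "\<lambda>p. noise_model p (\<alpha> p) (\<beta> p)" and ?r = "\<lambda>p. (real p * (real p - 1) / 2) powr (-1/2)"
  let ?u1 = "\<lambda>p \<omega>. u1_hat p (A p) (fst \<omega>)" and ?u2 = "\<lambda>p \<omega>. u2_hat p (A p) (fst \<omega>) (snd \<omega>)"
  note estimator = bigOp_noise_model_estimator[OF A01 alpha_nn beta_nn ab_le]
  have density: "0 \<le> edge_density p (A p)" "edge_density p (A p) \<le> 1" for p
    using A01 by (blast intro: edge_density_bounds)+
  note error_bounds = beta_hat_error delta_hat_alpha_error alpha_hat_error delta_hat_beta_error
  note errors = error_bounds[OF alpha_nn beta_nn ab_le density, simplified]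
  show ?thesis
  proof (intro conjI impI)
    assume "\<exists>c>0. \<forall>\<^sub>F p in sequentially. c \<le> edge_density p (A p) * (1 - \<alpha> p - \<beta> p)\<^sup>2"
      (is "\<exists>c>0. ?ev c")
    then obtain c where c: "c > 0" and ev: "?ev c"
      by blast
    show "bigOp ?M (\<lambda>p \<omega>. beta_hat (\<alpha> p) (?u1 p \<omega>) (?u2 p \<omega>) - \<beta> p) ?r"
      using c ev by (intro estimator[where C = "4 / c" and T = "c / 8"])
        (auto elim!: eventually_mono intro: errors)
    show "bigOp ?M (\<lambda>p \<omega>. delta_hat_alpha (\<alpha> p) (?u1 p \<omega>) (?u2 p \<omega>) - edge_density p (A p)) ?r"
      using c ev by (intro estimator[where C = "10 / c" and T = "c / 8"])
        (auto elim!: eventually_mono intro: errors)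
  next
    assume "\<exists>c>0. \<forall>\<^sub>F p in sequentially. c \<le> (1 - edge_density p (A p)) * (1 - \<alpha> p - \<beta> p)\<^sup>2"
      (is "\<exists>c>0. ?ev c")
    then obtain c where c: "c > 0" and ev: "?ev c"
      by blast
    show "bigOp ?M (\<lambda>p \<omega>. alpha_hat (\<beta> p) (?u1 p \<omega>) (?u2 p \<omega>) - \<alpha> p) ?r"
      using c ev by (intro estimator[where C = "4 / c" and T = "c / 8"])
        (auto elim!: eventually_mono intro: errors)
    show "bigOp ?M (\<lambda>p \<omega>. delta_hat_beta (\<beta> p) (?u1 p \<omega>) (?u2 p \<omega>) - edge_density p (A p)) ?r"
      using c ev by (intro estimator[where C = "10 / c" and T = "c / 8"])
        (auto elim!: eventually_mono intro: errors)
  qed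
qed

end
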